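(* Let $\rho$ be a valuation of a fixpoint context $\Theta$, let $(X:\sigma)\in\Theta$, and for $\varphi\in\mathcal{L}^s(\Theta;\tau)$ let $[\![X.\varphi]\!]\rho : \mathcal{P}([\![\sigma]\!]) \to \mathcal{P}([\![\tau]\!])$ be the map $S \mapsto [\![\varphi]\!]\rho[S/X]$. (1) If $\varphi \in \mathcal{L}^s(\Theta;\tau)$ for any $s\in\{\pm,+,-\}$, then $[\![X.\varphi]\!]\rho$ is monotone. (2) If $\varphi \in \mathcal{L}^+(\Theta;\tau)$, then $[\![X.\varphi]\!]\rho$ preserves directed unions. (3) If $\varphi\in\mathcal{L}^-(\Theta;\tau)$, then $[\![X.\varphi]\!]\rho$ preserves codirected intersections.
   Context: Pure types: closed types of $\tau ::= \mathbf{1} \mid \tau\times\tau \mid \tau\to\tau \mid \tau+\tau \mid \alpha \mid \mu\alpha.\tau$, interpreted as Scott domains: $[\![\mathbf{1}]\!]=\{\bot\le\top\}$; products componentwise with projections $\pi_1,\pi_2$; $[\![\tau\to\sigma]\!]$ = Scott-continuous functions with pointwise order; $[\![\tau_1+\tau_2]\!]$ = disjoint union with a new bottom, with injections $\mathrm{inj}_i$; $[\![\mu\alpha.\tau]\!]$ = canonical bilimit solution with inverse isomorphisms $\mathrm{fold}:[\![\tau[\mu\alpha.\tau/\alpha]]\!]\to[\![\mu\alpha.\tau]\!]$, $\mathrm{unfold}$. A family of sets is directed (resp. codirected) if nonempty and any two members are contained in (resp. contain) a common member. Iteration terms: $t ::= i \mid 0 \mid t+1$. Fixpoint contexts $\Theta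 = X_1:\sigma_1,\dots,X_n:\sigma_n$. For $s\in\{\pm,+,-\}$, $\mathcal{L}^s(\Theta;\tau)$ is generated by: $\mathrm{True},\mathrm{False}$; closure under $\wedge,\vee$; $\langle()\rangle\in\mathcal{L}^s(\Theta;\mathbf{1})$; $\langle\pi_i\rangle\varphi$ (type $\tau_1\times\tau_2$, $\varphi$ of type $\tau_i$); $\langle\mathrm{inj}_i\rangle\varphi$ (type $\tau_1+\tau_2$, $\varphi$ of type $\tau_i$); $\langle\mathrm{fold}\rangle\varphi$ (type $\mu\alpha.\tau$, $\varphi$ of type $\tau[\mu\alpha.\tau/\alpha]$); $X$ if $(X:\tau)\in\Theta$; weakening of $\Theta$; $(\mu^t X)\varphi,(\nu^t X)\varphi\in\mathcal{L}^s(\Theta;\tau)$ if $\varphi\in\mathcal{L}^s(\Theta,X:\tau;\tau)$; $(\exists i)\varphi\in\mathcal{L}^+(\Theta;\tau)$ if $\varphi\in\mathcal{L}^+(\Theta;\tau)$ and $i \mathrel{\mathrm{Pos}} \varphi$; $(\forall i)\varphi\in\mathcal{L}^-(\Theta;\tau)$ if $\varphi\in\mathcal{L}^-(\Theta;\tau)$ and $i\mathrel{\mathrm{Neg}}\varphi$; $\psi\Rightarrow\varphi\in\mathcal{L}^s(\,;\sigma\to\tau)$ if $\psi\in\mathcal{L}^{-s}(\,;\sigma)$ and $\varphi\in\mathcal{L}^s(\,;\tau)$, where $-\pm=\pm$, $-+=-$, $--=+$. Pos, Neg are inductively defined: $i\mathrel{\mathrm{Pos}}\varphi$ and $i\mathrel{\mathrm{Neg}}\varphi$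 hold if $i$ not free in $\varphi$; both preserved by $\wedge,\vee$ and the modalities; $i\mathrel{\mathrm{Pos}}(\psi\Rightarrow\varphi)$ if $i\mathrel{\mathrm{Neg}}\psi$ and $i\mathrel{\mathrm{Pos}}\varphi$; $i\mathrel{\mathrm{Neg}}(\psi\Rightarrow\varphi)$ if $i\mathrel{\mathrm{Pos}}\psi$ and $i\mathrel{\mathrm{Neg}}\varphi$; $i\mathrel{\mathrm{Pos}}(\exists j)\varphi$ if $i\mathrel{\mathrm{Pos}}\varphi$; $i\mathrel{\mathrm{Neg}}(\forall j)\varphi$ if $i\mathrel{\mathrm{Neg}}\varphi$; $i\mathrel{\mathrm{Pos}}(\mu^tX)\varphi$ if $i\mathrel{\mathrm{Pos}}\varphi$; $i\mathrel{\mathrm{Pos}}(\nu^tX)\varphi$ if $i\mathrel{\mathrm{Pos}}\varphi$ and $i$ not free in $t$; $i\mathrel{\mathrm{Neg}}(\nu^tX)\varphi$ if $i\mathrel{\mathrm{Neg}}\varphi$; $i\mathrel{\mathrm{Neg}}(\mu^tX)\varphi$ if $i\mathrel{\mathrm{Neg}}\varphi$ and $i$ not free in $t$. Semantics: a valuation $\rho$ of $\Theta$ maps each $(X:\sigma)\in\Theta$ to $\rho(X)\subseteq[\![\sigma]\!]$ and iteration variables to naturals. $[\![\mathrm{True}]\!]\rho=[\![\tau]\!]$, $[\![\mathrm{False}]\!]\rho=\emptyset$, $\wedge,\vee$ are $\cap,\cup$, $[\![X]\!]\rho=\rho(X)$, $[\![\langle()\rangle]\!]\rho=\{\top\}$,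 $[\![\langle\pi_i\rangle\varphi]\!]\rho=\{x\mid \pi_i(x)\in[\![\varphi]\!]\rho\}$, $[\![\langle\mathrm{inj}_i\rangle\varphi]\!]\rho=\{\mathrm{inj}_i(x)\mid x\in[\![\varphi]\!]\rho\}$, $[\![\langle\mathrm{fold}\rangle\varphi]\!]\rho=\{x\mid\mathrm{unfold}(x)\in[\![\varphi]\!]\rho\}$, $[\![\psi\Rightarrow\varphi]\!]\rho=\{f\mid\forall x\in[\![\psi]\!]\rho,\ f(x)\in[\![\varphi]\!]\rho\}$, $[\![(\exists i)\varphi]\!]\rho=\bigcup_{n}[\![\varphi]\!]\rho[n/i]$, $[\![(\forall i)\varphi]\!]\rho=\bigcap_{n}[\![\varphi]\!]\rho[n/i]$, and with $F(S)=[\![\varphi]\!]\rho[S/X]$, $n=[\![t]\!]\rho$: $[\![(\mu^tX)\varphi]\!]\rho=F^n(\emptyset)$, $[\![(\nu^tX)\varphi]\!]\rho=F^n([\![\tau]\!])$. *)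

theory Defs
  imports Main
begin

datatype ty = TUnit | TProd ty ty | TFun ty ty | TSum ty ty | TVar string | TMu string ty

fun tfv :: "ty \<Rightarrow> string set" where
  "tfv TUnit = {}"
| "tfv (TProd a b) = tfv a \<union> tfv b"
| "tfv (TFun a b) = tfv a \<union> tfv b"
| "tfv (TSum a b) = tfv a \<union> tfv b"
| "tfv (TVar x) = {x}"
| "tfv (TMu x a) = tfv a - {x}"

definition closed_ty :: "ty \<Rightarrow> bool" where
  "closed_ty t \<longleftrightarrow> tfv t = {}"

text \<open>Substitution of a (closed) type for a type variable; no capture can occur
  since only closed types are substituted.\<close>
fun tsubst :: "string \<Rightarrow> ty \<Rightarrow> ty \<Rightarrow> ty" where
  "tsubst x u TUnit = TUnit"
| "tsubst x u (TProd a b) = TProd (tsubst x u a) (tsubst x u b)"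
| "tsubst x u (TFun a b) = TFun (tsubst x u a) (tsubst x u b)"
| "tsubst x u (TSum a b) = TSum (tsubst x u a) (tsubst x u b)"
| "tsubst x u (TVar y) = (if x = y then u else TVar y)"
| "tsubst x u (TMu y a) = (if x = y then TMu y a else TMu y (tsubst x u a))"

text \<open>All type interpretations live in a common universe 'd. tdom gives the
  carrier of each type; the remaining fields are the semantic operations used by
  the logic (the top element of the unit type, projections, injections, unfold,
  application of a function element).\<close>

record 'd ty_interp =
  tdom :: "ty \<Rightarrow> 'd set"
  top_el :: 'd
  bot_el :: 'd
  proj_op :: "nat \<Rightarrow> 'd \<Rightarrow> 'd"
  inj_op :: "nat \<Rightarrow> 'd \<Rightarrow> 'd"
  fold_op :: "'d \<Rightarrow> 'd"
  unfold_op :: "'d \<Rightarrow> 'd"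
  app_op :: "'d \<Rightarrow> 'd \<Rightarrow> 'd"

text \<open>Basic structural properties enjoyed by the Scott-domain interpretation.\<close>
definition domain_model :: "'d ty_interp \<Rightarrow> bool" where
  "domain_model I \<longleftrightarrow>
     tdom I TUnit = {bot_el I, top_el I} \<and> bot_el I \<noteq> top_el I
   \<and> (\<forall>a b x. x \<in> tdom I (TProd a b) \<longrightarrow>
          proj_op I 1 x \<in> tdom I a \<and> proj_op I 2 x \<in> tdom I b)
   \<and> (\<forall>a b. inj_on (inj_op I 1) (tdom I a) \<and> inj_on (inj_op I 2) (tdom I b)
          \<and> inj_op I 1 ` tdom I a \<subseteq> tdom I (TSum a b)
          \<and> inj_op I 2 ` tdom I b \<subseteq> tdom I (TSum a b)
          \<and> inj_op I 1 ` tdom I a \<inter> inj_op I 2 ` tdom I b = {})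
   \<and> (\<forall>a b f x. f \<in> tdom I (TFun a b) \<longrightarrow> x \<in> tdom I a \<longrightarrow> app_op I f x \<in> tdom I b)
   \<and> (\<forall>x t. bij_betw (unfold_op I) (tdom I (TMu x t)) (tdom I (tsubst x (TMu x t) t))
          \<and> (\<forall>y \<in> tdom I (TMu x t). fold_op I (unfold_op I y) = y)
          \<and> (\<forall>z \<in> tdom I (tsubst x (TMu x t) t). unfold_op I (fold_op I z) = z))"

datatype iterm = IVar string | IZero | ISuc iterm

fun ifv :: "iterm \<Rightarrow> string set" where
  "ifv (IVar i) = {i}" | "ifv IZero = {}" | "ifv (ISuc t) = ifv t"

fun ieval :: "(string \<Rightarrow> nat) \<Rightarrow> iterm \<Rightarrow> nat" where
  "ieval N (IVar i) = N i" | "ieval N IZero = 0" | "ieval N (ISuc t) = Suc (ieval N t)"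

datatype form =
    FTrue | FFalse
  | FAnd form form | FOr form form
  | FUnit
  | FProj nat form                 (* <pi_i> phi, i in {1,2} *)
  | FInj nat form                  (* <inj_i> phi, i in {1,2} *)
  | FFold form
  | FVar string
  | FMu iterm string form
  | FNu iterm string form
  | FEx string form
  | FAll string form
  | FImp form form

fun fiv :: "form \<Rightarrow> string set" where
  "fiv FTrue = {}" | "fiv FFalse = {}"
| "fiv (FAnd a b) = fiv a \<union> fiv b" | "fiv (FOr a b) = fiv a \<union> fiv b"
| "fiv FUnit = {}"
| "fiv (FProj i a) = fiv a" | "fiv (FInj i a) = fiv a" | "fiv (FFold a) = fiv a"
| "fiv (FVar X) = {}"
| "fiv (FMu t X a) = ifv t \<union> fiv a" | "fiv (FNu t X a) = ifv t \<union> fiv a"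
| "fiv (FEx i a) = fiv a - {i}" | "fiv (FAll i a) = fiv a - {i}"
| "fiv (FImp a b) = fiv a \<union> fiv b"

inductive Pos :: "string \<Rightarrow> form \<Rightarrow> bool" and Neg :: "string \<Rightarrow> form \<Rightarrow> bool" where
  Pos_nf: "i \<notin> fiv a \<Longrightarrow> Pos i a"
| Neg_nf: "i \<notin> fiv a \<Longrightarrow> Neg i a"
| Pos_and: "Pos i a \<Longrightarrow> Pos i b \<Longrightarrow> Pos i (FAnd a b)"
| Neg_and: "Neg i a \<Longrightarrow> Neg i b \<Longrightarrow> Neg i (FAnd a b)"
| Pos_or: "Pos i a \<Longrightarrow> Pos i b \<Longrightarrow> Pos i (FOr a b)"
| Neg_or: "Neg i a \<Longrightarrow> Neg i b \<Longrightarrow> Neg i (FOr a b)"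
| Pos_proj: "Pos i a \<Longrightarrow> Pos i (FProj k a)"
| Neg_proj: "Neg i a \<Longrightarrow> Neg i (FProj k a)"
| Pos_inj: "Pos i a \<Longrightarrow> Pos i (FInj k a)"
| Neg_inj: "Neg i a \<Longrightarrow> Neg i (FInj k a)"
| Pos_fold: "Pos i a \<Longrightarrow> Pos i (FFold a)"
| Neg_fold: "Neg i a \<Longrightarrow> Neg i (FFold a)"
| Pos_imp: "Neg i a \<Longrightarrow> Pos i b \<Longrightarrow> Pos i (FImp a b)"
| Neg_imp: "Pos i a \<Longrightarrow> Neg i b \<Longrightarrow> Neg i (FImp a b)"
| Pos_ex: "Pos i a \<Longrightarrow> Pos i (FEx j a)"
| Neg_all: "Neg i a \<Longrightarrow> Neg i (FAll j a)"
| Pos_mu: "Pos i a \<Longrightarrow> Pos i (FMu t X a)"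
| Pos_nu: "Pos i a \<Longrightarrow> i \<notin> ifv t \<Longrightarrow> Pos i (FNu t X a)"
| Neg_nu: "Neg i a \<Longrightarrow> Neg i (FNu t X a)"
| Neg_mu: "Neg i a \<Longrightarrow> i \<notin> ifv t \<Longrightarrow> Neg i (FMu t X a)"

text \<open>Polarities s in {+-, +, -}.\<close>
datatype sgn = SPM | SPlus | SMinus

fun neg_sgn :: "sgn \<Rightarrow> sgn" where
  "neg_sgn SPM = SPM" | "neg_sgn SPlus = SMinus" | "neg_sgn SMinus = SPlus"

text \<open>Fixpoint contexts are finite partial maps from fixpoint variables to types.
  L s Theta phi tau  means  phi \<in> L^s(Theta; tau).\<close>
type_synonym fctx = "string \<rightharpoonup> ty"

inductive L :: "sgn \<Rightarrow> fctx \<Rightarrow> form \<Rightarrow> ty \<Rightarrow> bool" where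
  L_true: "L s \<Theta> FTrue \<tau>"
| L_false: "L s \<Theta> FFalse \<tau>"
| L_and: "L s \<Theta> a \<tau> \<Longrightarrow> L s \<Theta> b \<tau> \<Longrightarrow> L s \<Theta> (FAnd a b) \<tau>"
| L_or: "L s \<Theta> a \<tau> \<Longrightarrow> L s \<Theta> b \<tau> \<Longrightarrow> L s \<Theta> (FOr a b) \<tau>"
| L_unit: "L s \<Theta> FUnit TUnit"
| L_proj1: "L s \<Theta> a \<tau>1 \<Longrightarrow> L s \<Theta> (FProj 1 a) (TProd \<tau>1 \<tau>2)"
| L_proj2: "L s \<Theta> a \<tau>2 \<Longrightarrow> L s \<Theta> (FProj 2 a) (TProd \<tau>1 \<tau>2)"
| L_inj1: "L s \<Theta> a \<tau>1 \<Longrightarrow> L s \<Theta> (FInj 1 a) (TSum \<tau>1 \<tau>2)"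
| L_inj2: "L s \<Theta> a \<tau>2 \<Longrightarrow> L s \<Theta> (FInj 2 a) (TSum \<tau>1 \<tau>2)"
| L_fold: "L s \<Theta> a (tsubst \<alpha> (TMu \<alpha> \<tau>) \<tau>) \<Longrightarrow> L s \<Theta> (FFold a) (TMu \<alpha> \<tau>)"
| L_var: "\<Theta> X = Some \<tau> \<Longrightarrow> L s \<Theta> (FVar X) \<tau>"
| L_weak: "L s \<Theta> a \<tau> \<Longrightarrow> \<Theta> \<subseteq>\<^sub>m \<Theta>' \<Longrightarrow> L s \<Theta>' a \<tau>"
| L_mu: "L s (\<Theta>(X \<mapsto> \<tau>)) a \<tau> \<Longrightarrow> L s \<Theta> (FMu t X a) \<tau>"
| L_nu: "L s (\<Theta>(X \<mapsto> \<tau>)) a \<tau> \<Longrightarrow> L s \<Theta> (FNu t X a) \<tau>"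
| L_ex: "L SPlus \<Theta> a \<tau> \<Longrightarrow> Pos i a \<Longrightarrow> L SPlus \<Theta> (FEx i a) \<tau>"
| L_all: "L SMinus \<Theta> a \<tau> \<Longrightarrow> Neg i a \<Longrightarrow> L SMinus \<Theta> (FAll i a) \<tau>"
| L_imp: "L (neg_sgn s) Map.empty b \<sigma> \<Longrightarrow> L s Map.empty a \<tau> \<Longrightarrow>
            L s Map.empty (FImp b a) (TFun \<sigma> \<tau>)"

text \<open>sem I V N phi tau: the interpretation of phi at type tau under the valuation
  (V for fixpoint variables, N for iteration variables).\<close>
fun sem :: "'d ty_interp \<Rightarrow> (string \<Rightarrow> 'd set) \<Rightarrow> (string \<Rightarrow> nat) \<Rightarrow> form \<Rightarrow> ty \<Rightarrow> 'd set" where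
  "sem I V N FTrue \<tau> = tdom I \<tau>"
| "sem I V N FFalse \<tau> = {}"
| "sem I V N (FAnd a b) \<tau> = sem I V N a \<tau> \<inter> sem I V N b \<tau>"
| "sem I V N (FOr a b) \<tau> = sem I V N a \<tau> \<union> sem I V N b \<tau>"
| "sem I V N FUnit \<tau> = {top_el I}"
| "sem I V N (FProj k a) \<tau> = (case \<tau> of
      TProd \<tau>1 \<tau>2 \<Rightarrow> {x \<in> tdom I \<tau>. proj_op I k x \<in> sem I V N a (if k = 1 then \<tau>1 else \<tau>2)}
    | _ \<Rightarrow> {})"
| "sem I V N (FInj k a) \<tau> = (case \<tau> of
      TSum \<tau>1 \<tau>2 \<Rightarrow> inj_op I k ` sem I V N a (if k = 1 then \<tau>1 else \<tau>2)
    | _ \<Rightarrow> {})"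
| "sem I V N (FFold a) \<tau> = (case \<tau> of
      TMu \<alpha> \<tau>' \<Rightarrow> {x \<in> tdom I \<tau>. unfold_op I x \<in> sem I V N a (tsubst \<alpha> (TMu \<alpha> \<tau>') \<tau>')}
    | _ \<Rightarrow> {})"
| "sem I V N (FVar X) \<tau> = V X"
| "sem I V N (FMu t X a) \<tau> = ((\<lambda>S. sem I (V(X := S)) N a \<tau>) ^^ ieval N t) {}"
| "sem I V N (FNu t X a) \<tau> = ((\<lambda>S. sem I (V(X := S)) N a \<tau>) ^^ ieval N t) (tdom I \<tau>)"
| "sem I V N (FEx i a) \<tau> = (\<Union>n. sem I V (N(i := n)) a \<tau>)"
| "sem I V N (FAll i a) \<tau> = (\<Inter>n. sem I V (N(i := n)) a \<tau>)"
| "sem I V N (FImp b a) \<tau> = (case \<tau> of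
      TFun \<sigma> \<tau>' \<Rightarrow> {f \<in> tdom I \<tau>. \<forall>x \<in> sem I V N b \<sigma>. app_op I f x \<in> sem I V N a \<tau>'}
    | _ \<Rightarrow> {})"

definition valuation :: "'d ty_interp \<Rightarrow> fctx \<Rightarrow> (string \<Rightarrow> 'd set) \<Rightarrow> bool" where
  "valuation I \<Theta> V \<longleftrightarrow> (\<forall>Y \<sigma>. \<Theta> Y = Some \<sigma> \<longrightarrow> V Y \<subseteq> tdom I \<sigma>)"

definition directed_family :: "'a set set \<Rightarrow> bool" where
  "directed_family D \<longleftrightarrow> D \<noteq> {} \<and> (\<forall>A\<in>D. \<forall>B\<in>D. \<exists>C\<in>D. A \<subseteq> C \<and> B \<subseteq> C)"

definition codirected_family :: "'a set set \<Rightarrow> bool" where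
  "codirected_family D \<longleftrightarrow> D \<noteq> {} \<and> (\<forall>A\<in>D. \<forall>B\<in>D. \<exists>C\<in>D. C \<subseteq> A \<and> C \<subseteq> B)"

end

theory Submission
  imports Defs
begin

text \<open>
  Continuity is proved jointly in all fixpoint variables: for a family of valuations
  indexed by a set D that is directed for the pointwise order on the context, the
  semantics at the pointwise union is the union of the semantics (dually for
  codirected families and intersections).  This generalisation is what lets the
  induction over the typing derivation pass through \<open>(\<mu>\<^sup>t X)\<phi>\<close> and
  \<open>(\<nu>\<^sup>t X)\<phi>\<close>: their semantics is a finite iterate, and by monotonicity the
  iterates taken along the family, put in at X, form a directed family again.
  Directedness itself is needed only for conjunctions (unions) and disjunctions
  (intersections); \<open>\<exists>\<close> commutes with unions and \<open>\<forall>\<close> with intersections, which is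
  why \<open>L\<^sup>+\<close> admits only the former and \<open>L\<^sup>-\<close> only the latter, and implications are
  built from closed formulas, so their semantics is constant.
\<close>

lemma funpow_commute_family:
  fixes f :: "'a \<Rightarrow> 'a" and g :: "'i \<Rightarrow> 'a \<Rightarrow> 'a" and Op :: "('i \<Rightarrow> 'a) \<Rightarrow> 'a"
  assumes Op_const: "Op (\<lambda>i. x) = x"
    and P_const: "P (\<lambda>i. x)"
    and P_step: "\<And>A. P A \<Longrightarrow> P (\<lambda>i. g i (A i))"
    and commute: "\<And>A. P A \<Longrightarrow> f (Op A) = Op (\<lambda>i. g i (A i))"
  shows "(f ^^ n) x = Op (\<lambda>i. (g i ^^ n) x)"
proof -
  have "P (\<lambda>i. (g i ^^ n) x) \<and> (f ^^ n) x = Op (\<lambda>i. (g i ^^ n) x)"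
  proof (induction n)
    case 0
    show ?case using P_const Op_const by simp
  next
    case (Suc n)
    then show ?case using P_step[of "\<lambda>i. (g i ^^ n) x"] commute[of "\<lambda>i. (g i ^^ n) x"] by simp
  qed
  then show ?thesis ..
qed

definition directed_by :: "('i \<Rightarrow> 'i \<Rightarrow> bool) \<Rightarrow> 'i set \<Rightarrow> bool" where
  "directed_by R D \<longleftrightarrow> D \<noteq> {} \<and> (\<forall>i\<in>D. \<forall>j\<in>D. \<exists>k\<in>D. R i k \<and> R j k)"

lemma directed_by_mono:
  "directed_by R D \<Longrightarrow> (\<And>i k. R i k \<Longrightarrow> R' i k) \<Longrightarrow> directed_by R' D"
  unfolding directed_by_def by blast

lemma directed_family_iff_directed_by: "directed_family D \<longleftrightarrow> directed_by (\<subseteq>) D"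
  unfolding directed_family_def directed_by_def ..

lemma codirected_family_iff_directed_by: "codirected_family D \<longleftrightarrow> directed_by (\<supseteq>) D"
  unfolding codirected_family_def directed_by_def ..

lemma UNION_Int_directed_by:
  assumes dir: "directed_by R D"
    and A: "\<And>i k. R i k \<Longrightarrow> A i \<subseteq> A k" and B: "\<And>i k. R i k \<Longrightarrow> B i \<subseteq> B k"
  shows "(\<Union>i\<in>D. A i) \<inter> (\<Union>i\<in>D. B i) = (\<Union>i\<in>D. A i \<inter> B i)"
proof
  show "(\<Union>i\<in>D. A i) \<inter> (\<Union>i\<in>D. B i) \<subseteq> (\<Union>i\<in>D. A i \<inter> B i)"
  proof
    fix x assume "x \<in> (\<Union>i\<in>D. A i) \<inter> (\<Union>i\<in>D. B i)"
    then obtain i j where i: "i \<in> D" "x \<in> A i" and j: "j \<in> D" "x \<in> B j" by blast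
    with dir obtain k where "k \<in> D" "R i k" "R j k"
      unfolding directed_by_def by blast
    with A[of i k] B[of j k] i j show "x \<in> (\<Union>i\<in>D. A i \<inter> B i)" by blast
  qed
qed blast

lemma INTER_Un_directed_by:
  assumes dir: "directed_by R D"
    and A: "\<And>i k. R i k \<Longrightarrow> A k \<subseteq> A i" and B: "\<And>i k. R i k \<Longrightarrow> B k \<subseteq> B i"
  shows "(\<Inter>i\<in>D. A i) \<union> (\<Inter>i\<in>D. B i) = (\<Inter>i\<in>D. A i \<union> B i)"
proof
  show "(\<Inter>i\<in>D. A i \<union> B i) \<subseteq> (\<Inter>i\<in>D. A i) \<union> (\<Inter>i\<in>D. B i)"
  proof (rule subsetI, rule ccontr)
    fix x assume x: "x \<in> (\<Inter>i\<in>D. A i \<union> B i)" and "x \<notin> (\<Inter>i\<in>D. A i) \<union> (\<Inter>i\<in>D. B i)"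
    then obtain i j where i: "i \<in> D" "x \<notin> A i" and j: "j \<in> D" "x \<notin> B j" by blast
    with dir obtain k where "k \<in> D" "R i k" "R j k"
      unfolding directed_by_def by blast
    with A[of i k] B[of j k] i j x show False by blast
  qed
qed blast

definition val_le :: "fctx \<Rightarrow> (string \<Rightarrow> 'd set) \<Rightarrow> (string \<Rightarrow> 'd set) \<Rightarrow> bool" where
  "val_le \<Theta> V V' \<longleftrightarrow> (\<forall>Y\<in>dom \<Theta>. V Y \<subseteq> V' Y)"

lemma val_le_map_le: "\<Theta> \<subseteq>\<^sub>m \<Theta>' \<Longrightarrow> val_le \<Theta>' V V' \<Longrightarrow> val_le \<Theta> V V'"
  unfolding val_le_def using map_le_implies_dom_le by blast

lemma val_le_fun_upd:
  "val_le \<Theta> V V' \<Longrightarrow> S \<subseteq> S' \<Longrightarrow> val_le (\<Theta>(X \<mapsto> \<tau>)) (V(X := S)) (V'(X := S'))"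
  unfolding val_le_def by simp

lemma val_le_fun_upd_same: "S \<subseteq> T \<Longrightarrow> val_le \<Theta> (V(X := S)) (V(X := T))"
  unfolding val_le_def by simp

lemma valuation_map_le: "\<Theta> \<subseteq>\<^sub>m \<Theta>' \<Longrightarrow> valuation I \<Theta>' V \<Longrightarrow> valuation I \<Theta> V"
  unfolding valuation_def map_le_def by (metis domI)

lemma valuation_fun_upd:
  "valuation I \<Theta> V \<Longrightarrow> S \<subseteq> tdom I \<tau> \<Longrightarrow> valuation I (\<Theta>(X \<mapsto> \<tau>)) (V(X := S))"
  unfolding valuation_def by simp

lemma sem_mono:
  "L s \<Theta> \<phi> \<tau> \<Longrightarrow> val_le \<Theta> V V' \<Longrightarrow> sem I V N \<phi> \<tau> \<subseteq> sem I V' N \<phi> \<tau>"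
proof (induction arbitrary: V V' N rule: L.induct)
  case (L_and s \<Theta> a \<tau> b)
  show ?case unfolding sem.simps by (intro Int_mono L_and.IH L_and.prems)
next
  case (L_or s \<Theta> a \<tau> b)
  show ?case unfolding sem.simps by (intro Un_mono L_or.IH L_or.prems)
next
  case (L_proj1 s \<Theta> a \<tau>1 \<tau>2)
  show ?case using L_proj1.IH[OF L_proj1.prems] by auto
next
  case (L_proj2 s \<Theta> a \<tau>2 \<tau>1)
  show ?case using L_proj2.IH[OF L_proj2.prems] by auto
next
  case (L_inj1 s \<Theta> a \<tau>1 \<tau>2)
  show ?case using L_inj1.IH[OF L_inj1.prems] by auto
next
  case (L_inj2 s \<Theta> a \<tau>2 \<tau>1)
  show ?case using L_inj2.IH[OF L_inj2.prems] by auto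
next
  case (L_fold s \<Theta> a \<alpha> \<tau>)
  show ?case using L_fold.IH[OF L_fold.prems] by auto
next
  case (L_var \<Theta> X \<tau> s)
  then show ?case by (simp add: val_le_def domI)
next
  case (L_weak s \<Theta> a \<tau> \<Theta>')
  then show ?case using val_le_map_le by blast
next
  case (L_mu s \<Theta> X \<tau> a t)
  have "((\<lambda>S. sem I (V(X := S)) N a \<tau>) ^^ n) S0 \<subseteq> ((\<lambda>S. sem I (V'(X := S)) N a \<tau>) ^^ n) S0"
    for n S0 by (induction n) (simp_all del: fun_upd_apply add: L_mu.IH L_mu.prems val_le_fun_upd)
  then show ?case by simp
next
  case (L_nu s \<Theta> X \<tau> a t)
  have "((\<lambda>S. sem I (V(X := S)) N a \<tau>) ^^ n) S0 \<subseteq> ((\<lambda>S. sem I (V'(X := S)) N a \<tau>) ^^ n) S0"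
    for n S0 by (induction n) (simp_all del: fun_upd_apply add: L_nu.IH L_nu.prems val_le_fun_upd)
  then show ?case by simp
next
  case (L_ex \<Theta> a \<tau> i)
  show ?case unfolding sem.simps by (intro UN_mono L_ex.IH L_ex.prems subset_refl)
next
  case (L_all \<Theta> a \<tau> i)
  show ?case unfolding sem.simps by (intro INT_anti_mono L_all.IH L_all.prems subset_refl)
next
  case (L_imp s b \<sigma> a \<tau>)
  have "sem I V N b \<sigma> = sem I V' N b \<sigma>"
    using L_imp.IH(1)[of V V' N] L_imp.IH(1)[of V' V N] by (simp add: val_le_def)
  then show ?case using L_imp.IH(2)[OF L_imp.prems, of N] by auto
qed simp_all

lemma sem_empty_ctx_indep: "L s Map.empty \<phi> \<tau> \<Longrightarrow> sem I V N \<phi> \<tau> = sem I V' N \<phi> \<tau>"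
  using sem_mono[of s Map.empty \<phi> \<tau> V V' I N] sem_mono[of s Map.empty \<phi> \<tau> V' V I N]
  by (auto simp: val_le_def)

lemma sem_subset_tdom:
  assumes model: "domain_model I"
  shows "L s \<Theta> \<phi> \<tau> \<Longrightarrow> valuation I \<Theta> V \<Longrightarrow> sem I V N \<phi> \<tau> \<subseteq> tdom I \<tau>"
proof (induction arbitrary: V N rule: L.induct)
  case (L_and s \<Theta> a \<tau> b)
  then show ?case by auto
next
  case (L_or s \<Theta> a \<tau> b)
  then show ?case by (simp add: L_or.IH)
next
  case (L_unit s \<Theta>)
  show ?case using model by (simp add: domain_model_def)
next
  case (L_inj1 s \<Theta> a \<tau>1 \<tau>2)
  have "inj_op I 1 ` tdom I \<tau>1 \<subseteq> tdom I (TSum \<tau>1 \<tau>2)"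
    using model unfolding domain_model_def by blast
  then show ?case using L_inj1.IH[OF L_inj1.prems] by auto
next
  case (L_inj2 s \<Theta> a \<tau>2 \<tau>1)
  have "inj_op I 2 ` tdom I \<tau>2 \<subseteq> tdom I (TSum \<tau>1 \<tau>2)"
    using model unfolding domain_model_def by blast
  then show ?case using L_inj2.IH[OF L_inj2.prems] by auto
next
  case (L_var \<Theta> X \<tau> s)
  then show ?case by (simp add: valuation_def)
next
  case (L_weak s \<Theta> a \<tau> \<Theta>')
  then show ?case using valuation_map_le by blast
next
  case (L_mu s \<Theta> X \<tau> a t)
  have "((\<lambda>S. sem I (V(X := S)) N a \<tau>) ^^ n) {} \<subseteq> tdom I \<tau>" for n
    by (induction n) (simp_all del: fun_upd_apply add: L_mu.IH L_mu.prems valuation_fun_upd)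
  then show ?case by simp
next
  case (L_nu s \<Theta> X \<tau> a t)
  have "((\<lambda>S. sem I (V(X := S)) N a \<tau>) ^^ n) (tdom I \<tau>) \<subseteq> tdom I \<tau>" for n
    by (induction n) (simp_all del: fun_upd_apply add: L_nu.IH L_nu.prems valuation_fun_upd)
  then show ?case by simp
next
  case (L_ex \<Theta> a \<tau> i)
  then show ?case by (simp add: UN_least)
next
  case (L_all \<Theta> a \<tau> i)
  show ?case using L_all.IH[OF L_all.prems, of "N(i := 0)"] by (auto simp del: fun_upd_apply)
qed auto

text \<open>IH is the continuity of the body of a fixpoint formula; the invariant carried along
  the iteration is that the iterates are monotone in the index.\<close>

lemma funpow_sem_UNION_directed:
  fixes Vs :: "'i \<Rightarrow> string \<Rightarrow> 'd set"
  assumes a: "L s (\<Theta>(X \<mapsto> \<tau>)) a \<tau>"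
    and IH: "\<And>Ws W. directed_by (\<lambda>i k. val_le (\<Theta>(X \<mapsto> \<tau>)) (Ws i) (Ws k)) D \<Longrightarrow>
      \<forall>Y\<in>dom (\<Theta>(X \<mapsto> \<tau>)). W Y = (\<Union>i\<in>D. Ws i Y) \<Longrightarrow>
      sem I W N a \<tau> = (\<Union>i\<in>D. sem I (Ws i) N a \<tau>)"
    and dir: "directed_by (\<lambda>i k. val_le \<Theta> (Vs i) (Vs k)) D"
    and U: "\<forall>Y\<in>dom \<Theta>. U Y = (\<Union>i\<in>D. Vs i Y)"
  shows "((\<lambda>S. sem I (U(X := S)) N a \<tau>) ^^ n) S0
    = (\<Union>i\<in>D. ((\<lambda>S. sem I ((Vs i)(X := S)) N a \<tau>) ^^ n) S0)"
proof (rule funpow_commute_family[where Op = "\<lambda>A. \<Union>i\<in>D. A i"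
      and g = "\<lambda>i S. sem I ((Vs i)(X := S)) N a \<tau>"
      and P = "\<lambda>A. \<forall>i k. val_le \<Theta> (Vs i) (Vs k) \<longrightarrow> A i \<subseteq> A k"])
  show "(\<Union>i\<in>D. S0) = S0" using dir by (simp add: directed_by_def)
  fix A :: "'i \<Rightarrow> 'd set"
  assume mono: "\<forall>i k. val_le \<Theta> (Vs i) (Vs k) \<longrightarrow> A i \<subseteq> A k"
  then show "\<forall>i k. val_le \<Theta> (Vs i) (Vs k) \<longrightarrow>
      sem I ((Vs i)(X := A i)) N a \<tau> \<subseteq> sem I ((Vs k)(X := A k)) N a \<tau>"
    by (intro allI impI sem_mono[OF a] val_le_fun_upd) simp_all
  show "sem I (U(X := \<Union>i\<in>D. A i)) N a \<tau> = (\<Union>i\<in>D. sem I ((Vs i)(X := A i)) N a \<tau>)"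
  proof (rule IH)
    show "directed_by (\<lambda>i k. val_le (\<Theta>(X \<mapsto> \<tau>)) ((Vs i)(X := A i)) ((Vs k)(X := A k))) D"
      using dir by (rule directed_by_mono) (simp add: mono val_le_fun_upd)
    show "\<forall>Y\<in>dom (\<Theta>(X \<mapsto> \<tau>)). (U(X := \<Union>i\<in>D. A i)) Y = (\<Union>i\<in>D. ((Vs i)(X := A i)) Y)"
      using U by simp
  qed
qed simp

lemma sem_UNION_directed:
  fixes Vs :: "'i \<Rightarrow> string \<Rightarrow> 'd set"
  assumes "L SPlus \<Theta> \<phi> \<tau>"
    and "directed_by (\<lambda>i k. val_le \<Theta> (Vs i) (Vs k)) D"
    and "\<forall>Y\<in>dom \<Theta>. U Y = (\<Union>i\<in>D. Vs i Y)"
  shows "sem I U N \<phi> \<tau> = (\<Union>i\<in>D. sem I (Vs i) N \<phi> \<tau>)"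
  using assms
proof (induction SPlus \<Theta> \<phi> \<tau> arbitrary: Vs U N rule: L.induct)
  case (L_true \<Theta> \<tau>)
  show ?case using L_true.prems(1) by (simp add: directed_by_def)
next
  case (L_false \<Theta> \<tau>)
  show ?case by simp
next
  case (L_and \<Theta> a \<tau> b)
  have "(\<Union>i\<in>D. sem I (Vs i) N a \<tau>) \<inter> (\<Union>i\<in>D. sem I (Vs i) N b \<tau>)
      = (\<Union>i\<in>D. sem I (Vs i) N a \<tau> \<inter> sem I (Vs i) N b \<tau>)"
    using L_and.prems(1) by (rule UNION_Int_directed_by)
      (simp_all add: sem_mono[OF \<open>L SPlus \<Theta> a \<tau>\<close>] sem_mono[OF \<open>L SPlus \<Theta> b \<tau>\<close>])
  then show ?case using L_and.hyps(2,4)[OF L_and.prems] by simp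
next
  case (L_or \<Theta> a \<tau> b)
  show ?case using L_or.hyps(2,4)[OF L_or.prems] by auto
next
  case L_unit
  show ?case using L_unit.prems(1) by (simp add: directed_by_def)
next
  case (L_proj1 \<Theta> a \<tau>1 \<tau>2)
  show ?case using L_proj1.hyps(2)[OF L_proj1.prems] by auto
next
  case (L_proj2 \<Theta> a \<tau>2 \<tau>1)
  show ?case using L_proj2.hyps(2)[OF L_proj2.prems] by auto
next
  case (L_inj1 \<Theta> a \<tau>1 \<tau>2)
  show ?case using L_inj1.hyps(2)[OF L_inj1.prems] by auto
next
  case (L_inj2 \<Theta> a \<tau>2 \<tau>1)
  show ?case using L_inj2.hyps(2)[OF L_inj2.prems] by auto
next
  case (L_fold \<Theta> a \<alpha> \<tau>)
  show ?case using L_fold.hyps(2)[OF L_fold.prems] by auto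
next
  case (L_var \<Theta> X \<tau>)
  show ?case using L_var.prems(2) L_var.hyps by (simp add: domI)
next
  case (L_weak \<Theta> a \<tau> \<Theta>')
  show ?case
  proof (rule L_weak.hyps(2))
    show "directed_by (\<lambda>i k. val_le \<Theta> (Vs i) (Vs k)) D"
      using L_weak.prems(1) by (rule directed_by_mono) (rule val_le_map_le[OF \<open>\<Theta> \<subseteq>\<^sub>m \<Theta>'\<close>])
    show "\<forall>Y\<in>dom \<Theta>. U Y = (\<Union>i\<in>D. Vs i Y)"
      using L_weak.prems(2) map_le_implies_dom_le[OF \<open>\<Theta> \<subseteq>\<^sub>m \<Theta>'\<close>] by (simp add: subset_iff)
  qed
next
  case (L_mu \<Theta> X \<tau> a t)
  show ?case
    unfolding sem.simps by (rule funpow_sem_UNION_directed[OF L_mu.hyps(1) L_mu.hyps(2) L_mu.prems])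
next
  case (L_nu \<Theta> X \<tau> a t)
  show ?case
    unfolding sem.simps by (rule funpow_sem_UNION_directed[OF L_nu.hyps(1) L_nu.hyps(2) L_nu.prems])
next
  case (L_ex \<Theta> a \<tau> i)
  show ?case using L_ex.hyps(2)[OF L_ex.prems] by auto
next
  case (L_imp b \<sigma> a \<tau>)
  have "sem I (Vs j) N (FImp b a) (TFun \<sigma> \<tau>) = sem I U N (FImp b a) (TFun \<sigma> \<tau>)" for j
    using sem_empty_ctx_indep[OF \<open>L (neg_sgn SPlus) Map.empty b \<sigma>\<close>, of I "Vs j" N U]
      sem_empty_ctx_indep[OF \<open>L SPlus Map.empty a \<tau>\<close>, of I "Vs j" N U] by simp
  then show ?case using L_imp.prems(1) by (simp add: directed_by_def)
qed

lemma funpow_sem_INTER_codirected: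
  fixes Vs :: "'i \<Rightarrow> string \<Rightarrow> 'd set"
  assumes model: "domain_model I" and a: "L s (\<Theta>(X \<mapsto> \<tau>)) a \<tau>"
    and IH: "\<And>Ws W. directed_by (\<lambda>i k. val_le (\<Theta>(X \<mapsto> \<tau>)) (Ws k) (Ws i)) D \<Longrightarrow>
      \<forall>Y\<in>dom (\<Theta>(X \<mapsto> \<tau>)). W Y = (\<Inter>i\<in>D. Ws i Y) \<Longrightarrow>
      \<forall>i\<in>D. valuation I (\<Theta>(X \<mapsto> \<tau>)) (Ws i) \<Longrightarrow>
      sem I W N a \<tau> = (\<Inter>i\<in>D. sem I (Ws i) N a \<tau>)"
    and dir: "directed_by (\<lambda>i k. val_le \<Theta> (Vs k) (Vs i)) D"
    and U: "\<forall>Y\<in>dom \<Theta>. U Y = (\<Inter>i\<in>D. Vs i Y)"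
    and vals: "\<forall>i\<in>D. valuation I \<Theta> (Vs i)"
    and S0: "S0 \<subseteq> tdom I \<tau>"
  shows "((\<lambda>S. sem I (U(X := S)) N a \<tau>) ^^ n) S0
    = (\<Inter>i\<in>D. ((\<lambda>S. sem I ((Vs i)(X := S)) N a \<tau>) ^^ n) S0)"
proof (rule funpow_commute_family[where Op = "\<lambda>A. \<Inter>i\<in>D. A i"
      and g = "\<lambda>i S. sem I ((Vs i)(X := S)) N a \<tau>"
      and P = "\<lambda>A. (\<forall>i k. val_le \<Theta> (Vs i) (Vs k) \<longrightarrow> A i \<subseteq> A k) \<and> (\<forall>i\<in>D. A i \<subseteq> tdom I \<tau>)"])
  show "(\<Inter>i\<in>D. S0) = S0" using dir by (simp add: directed_by_def)
  show "(\<forall>i k. val_le \<Theta> (Vs i) (Vs k) \<longrightarrow> S0 \<subseteq> S0) \<and> (\<forall>i\<in>D. S0 \<subseteq> tdom I \<tau>)"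
    using S0 by simp
  fix A :: "'i \<Rightarrow> 'd set"
  assume "(\<forall>i k. val_le \<Theta> (Vs i) (Vs k) \<longrightarrow> A i \<subseteq> A k) \<and> (\<forall>i\<in>D. A i \<subseteq> tdom I \<tau>)"
  then have mono: "\<forall>i k. val_le \<Theta> (Vs i) (Vs k) \<longrightarrow> A i \<subseteq> A k"
    and vals': "\<forall>i\<in>D. valuation I (\<Theta>(X \<mapsto> \<tau>)) ((Vs i)(X := A i))"
    using vals by (simp_all add: valuation_fun_upd)
  have "\<forall>i k. val_le \<Theta> (Vs i) (Vs k) \<longrightarrow>
      sem I ((Vs i)(X := A i)) N a \<tau> \<subseteq> sem I ((Vs k)(X := A k)) N a \<tau>"
    using mono by (intro allI impI sem_mono[OF a] val_le_fun_upd) simp_all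
  moreover have "\<forall>i\<in>D. sem I ((Vs i)(X := A i)) N a \<tau> \<subseteq> tdom I \<tau>"
    using vals' sem_subset_tdom[OF model a] by blast
  ultimately show "(\<forall>i k. val_le \<Theta> (Vs i) (Vs k) \<longrightarrow>
      sem I ((Vs i)(X := A i)) N a \<tau> \<subseteq> sem I ((Vs k)(X := A k)) N a \<tau>)
    \<and> (\<forall>i\<in>D. sem I ((Vs i)(X := A i)) N a \<tau> \<subseteq> tdom I \<tau>)" ..
  show "sem I (U(X := \<Inter>i\<in>D. A i)) N a \<tau> = (\<Inter>i\<in>D. sem I ((Vs i)(X := A i)) N a \<tau>)"
  proof (rule IH)
    show "directed_by (\<lambda>i k. val_le (\<Theta>(X \<mapsto> \<tau>)) ((Vs k)(X := A k)) ((Vs i)(X := A i))) D"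
      using dir by (rule directed_by_mono) (simp add: mono val_le_fun_upd)
    show "\<forall>Y\<in>dom (\<Theta>(X \<mapsto> \<tau>)). (U(X := \<Inter>i\<in>D. A i)) Y = (\<Inter>i\<in>D. ((Vs i)(X := A i)) Y)"
      using U by simp
  qed (rule vals')
qed

lemma sem_INTER_codirected:
  fixes Vs :: "'i \<Rightarrow> string \<Rightarrow> 'd set"
  assumes model: "domain_model I"
    and "L SMinus \<Theta> \<phi> \<tau>"
    and "directed_by (\<lambda>i k. val_le \<Theta> (Vs k) (Vs i)) D"
    and "\<forall>Y\<in>dom \<Theta>. U Y = (\<Inter>i\<in>D. Vs i Y)"
    and "\<forall>i\<in>D. valuation I \<Theta> (Vs i)"
  shows "sem I U N \<phi> \<tau> = (\<Inter>i\<in>D. sem I (Vs i) N \<phi> \<tau>)"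
  using assms(2-)
proof (induction SMinus \<Theta> \<phi> \<tau> arbitrary: Vs U N rule: L.induct)
  case (L_true \<Theta> \<tau>)
  show ?case using L_true.prems(1) by (simp add: directed_by_def)
next
  case (L_false \<Theta> \<tau>)
  show ?case using L_false.prems(1) by (simp add: directed_by_def)
next
  case (L_and \<Theta> a \<tau> b)
  show ?case using L_and.hyps(2,4)[OF L_and.prems] by (simp add: INT_Int_distrib)
next
  case (L_or \<Theta> a \<tau> b)
  have "(\<Inter>i\<in>D. sem I (Vs i) N a \<tau>) \<union> (\<Inter>i\<in>D. sem I (Vs i) N b \<tau>)
      = (\<Inter>i\<in>D. sem I (Vs i) N a \<tau> \<union> sem I (Vs i) N b \<tau>)"
    using L_or.prems(1) by (rule INTER_Un_directed_by)
      (simp_all add: sem_mono[OF \<open>L SMinus \<Theta> a \<tau>\<close>] sem_mono[OF \<open>L SMinus \<Theta> b \<tau>\<close>])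
  then show ?case using L_or.hyps(2,4)[OF L_or.prems] by simp
next
  case L_unit
  show ?case using L_unit.prems(1) by (simp add: directed_by_def)
next
  case (L_proj1 \<Theta> a \<tau>1 \<tau>2)
  show ?case using L_proj1.hyps(2)[OF L_proj1.prems] L_proj1.prems(1)
    by (auto simp: directed_by_def)
next
  case (L_proj2 \<Theta> a \<tau>2 \<tau>1)
  show ?case using L_proj2.hyps(2)[OF L_proj2.prems] L_proj2.prems(1)
    by (auto simp: directed_by_def)
next
  case (L_inj1 \<Theta> a \<tau>1 \<tau>2)
  \<comment> \<open>Images commute with intersections only under injectivity: this is why the
    valuations must take values in the carriers.\<close>
  from L_inj1.prems(1) obtain j where "j \<in> D" by (auto simp: directed_by_def)
  have "inj_on (inj_op I 1) (tdom I \<tau>1)" using model by (simp add: domain_model_def)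
  moreover have "\<forall>i\<in>D. sem I (Vs i) N a \<tau>1 \<subseteq> tdom I \<tau>1"
    using L_inj1.prems(3) sem_subset_tdom[OF model \<open>L SMinus \<Theta> a \<tau>1\<close>] by blast
  ultimately have "inj_op I 1 ` (\<Inter>i\<in>D. sem I (Vs i) N a \<tau>1)
      = (\<Inter>i\<in>D. inj_op I 1 ` sem I (Vs i) N a \<tau>1)"
    using \<open>j \<in> D\<close> by (rule image_INT)
  then show ?case using L_inj1.hyps(2)[OF L_inj1.prems] by simp
next
  case (L_inj2 \<Theta> a \<tau>2 \<tau>1)
  from L_inj2.prems(1) obtain j where "j \<in> D" by (auto simp: directed_by_def)
  have "inj_on (inj_op I 2) (tdom I \<tau>2)" using model by (simp add: domain_model_def)
  moreover have "\<forall>i\<in>D. sem I (Vs i) N a \<tau>2 \<subseteq> tdom I \<tau>2"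
    using L_inj2.prems(3) sem_subset_tdom[OF model \<open>L SMinus \<Theta> a \<tau>2\<close>] by blast
  ultimately have "inj_op I 2 ` (\<Inter>i\<in>D. sem I (Vs i) N a \<tau>2)
      = (\<Inter>i\<in>D. inj_op I 2 ` sem I (Vs i) N a \<tau>2)"
    using \<open>j \<in> D\<close> by (rule image_INT)
  then show ?case using L_inj2.hyps(2)[OF L_inj2.prems] by simp
next
  case (L_fold \<Theta> a \<alpha> \<tau>)
  show ?case using L_fold.hyps(2)[OF L_fold.prems] L_fold.prems(1)
    by (auto simp: directed_by_def)
next
  case (L_var \<Theta> X \<tau>)
  show ?case using L_var.prems(2) L_var.hyps by (simp add: domI)
next
  case (L_weak \<Theta> a \<tau> \<Theta>')
  show ?case
  proof (rule L_weak.hyps(2))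
    show "directed_by (\<lambda>i k. val_le \<Theta> (Vs k) (Vs i)) D"
      using L_weak.prems(1) by (rule directed_by_mono) (rule val_le_map_le[OF \<open>\<Theta> \<subseteq>\<^sub>m \<Theta>'\<close>])
    show "\<forall>Y\<in>dom \<Theta>. U Y = (\<Inter>i\<in>D. Vs i Y)"
      using L_weak.prems(2) map_le_implies_dom_le[OF \<open>\<Theta> \<subseteq>\<^sub>m \<Theta>'\<close>] by (simp add: subset_iff)
    show "\<forall>i\<in>D. valuation I \<Theta> (Vs i)"
      using L_weak.prems(3) valuation_map_le[OF \<open>\<Theta> \<subseteq>\<^sub>m \<Theta>'\<close>] by blast
  qed
next
  case (L_mu \<Theta> X \<tau> a t)
  show ?case
    unfolding sem.simps
    by (rule funpow_sem_INTER_codirected[OF model L_mu.hyps(1) L_mu.hyps(2) L_mu.prems empty_subsetI])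
next
  case (L_nu \<Theta> X \<tau> a t)
  show ?case
    unfolding sem.simps
    by (rule funpow_sem_INTER_codirected[OF model L_nu.hyps(1) L_nu.hyps(2) L_nu.prems subset_refl])
next
  case (L_all \<Theta> a \<tau> i)
  show ?case using L_all.hyps(2)[OF L_all.prems] by auto
next
  case (L_imp b \<sigma> a \<tau>)
  have "sem I (Vs j) N (FImp b a) (TFun \<sigma> \<tau>) = sem I U N (FImp b a) (TFun \<sigma> \<tau>)" for j
    using sem_empty_ctx_indep[OF \<open>L (neg_sgn SMinus) Map.empty b \<sigma>\<close>, of I "Vs j" N U]
      sem_empty_ctx_indep[OF \<open>L SMinus Map.empty a \<tau>\<close>, of I "Vs j" N U] by simp
  then show ?case using L_imp.prems(1) by (simp add: directed_by_def)
qed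

lemma sem_fun_upd_UNION_directed:
  assumes "L SPlus \<Theta> \<phi> \<tau>" and "directed_family D"
  shows "sem I (V(X := \<Union>D)) N \<phi> \<tau> = (\<Union>S\<in>D. sem I (V(X := S)) N \<phi> \<tau>)"
proof (rule sem_UNION_directed[OF assms(1)])
  show dir: "directed_by (\<lambda>S T. val_le \<Theta> (V(X := S)) (V(X := T))) D"
    using \<open>directed_family D\<close> unfolding directed_family_iff_directed_by
    by (rule directed_by_mono) (rule val_le_fun_upd_same)
  show "\<forall>Y\<in>dom \<Theta>. (V(X := \<Union>D)) Y = (\<Union>S\<in>D. (V(X := S)) Y)"
    using dir by (simp add: directed_by_def)
qed

lemma sem_fun_upd_INTER_codirected:
  assumes "domain_model I" and "L SMinus \<Theta> \<phi> \<tau>" and "codirected_family D"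
    and "valuation I \<Theta> V" and "\<Theta> X = Some \<sigma>" and "D \<subseteq> Pow (tdom I \<sigma>)"
  shows "sem I (V(X := \<Inter>D)) N \<phi> \<tau> = (\<Inter>S\<in>D. sem I (V(X := S)) N \<phi> \<tau>)"
proof (rule sem_INTER_codirected[OF assms(1,2)])
  show dir: "directed_by (\<lambda>S T. val_le \<Theta> (V(X := T)) (V(X := S))) D"
    using \<open>codirected_family D\<close> unfolding codirected_family_iff_directed_by
    by (rule directed_by_mono) (rule val_le_fun_upd_same)
  show "\<forall>Y\<in>dom \<Theta>. (V(X := \<Inter>D)) Y = (\<Inter>S\<in>D. (V(X := S)) Y)"
    using dir by (simp add: directed_by_def)
  show "\<forall>S\<in>D. valuation I \<Theta> (V(X := S))"
    using assms(4-6) by (auto simp: valuation_def)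
qed

theorem proposition5p6:
  fixes I :: "'d ty_interp" and V :: "string \<Rightarrow> 'd set" and N :: "string \<Rightarrow> nat"
    and \<Theta> :: fctx and X :: string and \<sigma> \<tau> :: ty and \<phi> :: form and s :: sgn
  assumes model: "domain_model I"
    and ctx_closed: "\<forall>Y \<sigma>'. \<Theta> Y = Some \<sigma>' \<longrightarrow> closed_ty \<sigma>'"
    and tau_closed: "closed_ty \<tau>"
    and val: "valuation I \<Theta> V"
    and X_in: "\<Theta> X = Some \<sigma>"
    and typed: "L s \<Theta> \<phi> \<tau>"
  shows "(\<forall>S T. S \<subseteq> T \<longrightarrow> T \<subseteq> tdom I \<sigma> \<longrightarrow>
             sem I (V(X := S)) N \<phi> \<tau> \<subseteq> sem I (V(X := T)) N \<phi> \<tau>)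
       \<and> (s = SPlus \<longrightarrow> (\<forall>D. directed_family D \<longrightarrow> D \<subseteq> Pow (tdom I \<sigma>) \<longrightarrow>
             sem I (V(X := \<Union>D)) N \<phi> \<tau> = (\<Union>S\<in>D. sem I (V(X := S)) N \<phi> \<tau>)))
       \<and> (s = SMinus \<longrightarrow> (\<forall>D. codirected_family D \<longrightarrow> D \<subseteq> Pow (tdom I \<sigma>) \<longrightarrow>
             sem I (V(X := \<Inter>D)) N \<phi> \<tau> = (\<Inter>S\<in>D. sem I (V(X := S)) N \<phi> \<tau>)))"
proof (intro conjI allI impI)
  show "sem I (V(X := S)) N \<phi> \<tau> \<subseteq> sem I (V(X := T)) N \<phi> \<tau>" if "S \<subseteq> T" for S T
    using typed val_le_fun_upd_same[OF that] by (rule sem_mono)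
  show "sem I (V(X := \<Union>D)) N \<phi> \<tau> = (\<Union>S\<in>D. sem I (V(X := S)) N \<phi> \<tau>)"
    if "s = SPlus" and "directed_family D" for D
    using typed that by (intro sem_fun_upd_UNION_directed) simp_all
  show "sem I (V(X := \<Inter>D)) N \<phi> \<tau> = (\<Inter>S\<in>D. sem I (V(X := S)) N \<phi> \<tau>)"
    if "s = SMinus" and "codirected_family D" and "D \<subseteq> Pow (tdom I \<sigma>)" for D
    using typed that by (intro sem_fun_upd_INTER_codirected[OF model _ _ val X_in]) simp_all
qed

end
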